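(* Let $G$ be a connected graph with $n\ge 2$ vertices. Then $$EE(G) > e^{2\cos\left(\frac{\pi}{n+1}\right)} + (n-1) - 2\cos\left(\frac{\pi}{n+1}\right).$$
   Context: All graphs are finite, simple and undirected. For a graph $G$ with adjacency matrix $A(G)$ having eigenvalues $\lambda_1\ge\cdots\ge\lambda_n$, the Estrada index is $EE(G)=\sum_{i=1}^n e^{\lambda_i}$. *)

theory Defs
  imports "Jordan_Normal_Form.Char_Poly"
begin

text \<open>A finite simple graph on the vertex set {0..<n}, given by an
  irreflexive symmetric adjacency relation E (values outside {0..<n} are irrelevant).\<close>
definition simple_graph :: "nat \<Rightarrow> (nat \<Rightarrow> nat \<Rightarrow> bool) \<Rightarrow> bool" where
  "simple_graph n E \<longleftrightarrow> (\<forall>i<n. \<forall>j<n. E i j \<longrightarrow> E j i) \<and> (\<forall>i<n. \<not> E i i)"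

definition graph_edges :: "nat \<Rightarrow> (nat \<Rightarrow> nat \<Rightarrow> bool) \<Rightarrow> (nat \<times> nat) set" where
  "graph_edges n E = {(i, j). i < n \<and> j < n \<and> E i j}"

definition connected_graph :: "nat \<Rightarrow> (nat \<Rightarrow> nat \<Rightarrow> bool) \<Rightarrow> bool" where
  "connected_graph n E \<longleftrightarrow> (\<forall>i<n. \<forall>j<n. (i, j) \<in> (graph_edges n E)\<^sup>*)"

definition adjacency_matrix :: "nat \<Rightarrow> (nat \<Rightarrow> nat \<Rightarrow> bool) \<Rightarrow> real mat" where
  "adjacency_matrix n E = mat n n (\<lambda>(i, j). if E i j then 1 else 0)"

text \<open>Eigenvalues with multiplicity: the multiset of roots of the characteristic
  polynomial (the adjacency matrix is real symmetric, so all roots are real).\<close>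
definition eigenvalues_mset :: "real mat \<Rightarrow> real multiset" where
  "eigenvalues_mset A = proots (char_poly A)"

definition estrada_index :: "nat \<Rightarrow> (nat \<Rightarrow> nat \<Rightarrow> bool) \<Rightarrow> real" where
  "estrada_index n E = (\<Sum>\<^sub># (image_mset exp (eigenvalues_mset (adjacency_matrix n E))))"

end

theory Submission
  imports Defs "Jordan_Normal_Form.Schur_Decomposition"
begin

text \<open>Since the adjacency matrix A is real symmetric, its eigenvalues are real, so the bound
  e^x \<ge> 1 + x + x^2/2 + x^3/6 can be summed over them.  The power sums of the eigenvalues are
  the traces tr(A^k): tr(A) = 0, tr(A^2) is twice the number of edges, which is at least
  2(n - 1) for a connected graph, and tr(A^3) \<ge> 0 as A is entrywise nonnegative.  Hence
  EE(G) \<ge> n + (n - 1) = 2n - 1, and it remains to check the numerical inequality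
  e^c - c < n for c = 2 cos(\<pi>/(n + 1)).  Since e^c - c increases on [0, \<infinity>), this follows
  from c \<le> 2 for n \<ge> 6 and from c = 1, c = \<surd>2 and c \<le> \<surd>3 for n = 2, n = 3 and n \<le> 5.\<close>

lemma exp_ge_taylor_polynomial:
  fixes x :: real
  assumes "even m"
  shows "(\<Sum>k<m. x ^ k / fact k) \<le> exp x"
proof -
  obtain t where "exp x = (\<Sum>k<m. x ^ k / fact k) + exp t / fact m * x ^ m"
    using Maclaurin_exp_le[of x m] by blast
  moreover have "exp t / fact m * x ^ m \<ge> 0"
    using assms by (simp add: zero_le_even_power)
  ultimately show ?thesis by linarith
qed

lemma exp_le_inverse_square:
  fixes x p :: real
  assumes "0 < p" and "p \<le> exp (- x / 2)"
  shows "exp x \<le> 1 / p\<^sup>2"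
proof -
  have "p\<^sup>2 \<le> exp (- x / 2) ^ 2" using assms by (simp add: power_mono)
  also have "\<dots> = 1 / exp x" by (simp add: exp_minus power2_eq_square field_simps flip: exp_add)
  finally show ?thesis using assms by (simp add: field_simps)
qed

text \<open>Taking the Taylor polynomial at -x/2 rather than at -x makes the bound sharp enough
  for the concrete x \<le> 2 needed below, where simp evaluates it.\<close>
lemma exp_le_inverse_square_taylor:
  fixes x :: real
  defines "p \<equiv> \<Sum>k<6. (- x / 2) ^ k / fact k"
  assumes "0 < p"
  shows "exp x \<le> 1 / p\<^sup>2"
  using assms exp_le_inverse_square exp_ge_taylor_polynomial[of 6] by simp

lemma exp_minus_self_mono:
  fixes a b :: real
  assumes "0 \<le> a" and "a \<le> b"
  shows "exp a - a \<le> exp b - b"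
proof -
  have "exp a * (1 + (b - a)) \<le> exp a * exp (b - a)"
    using exp_ge_add_one_self[of "b - a"] by simp
  also have "\<dots> = exp b" by (simp flip: exp_add)
  finally have "exp a + exp a * (b - a) \<le> exp b" by (simp add: algebra_simps)
  moreover have "b - a \<le> exp a * (b - a)"
    using assms by (simp add: mult_le_cancel_right1)
  ultimately show ?thesis by linarith
qed

lemma cos_pi_div_Suc_mono:
  assumes "n \<le> m"
  shows "cos (pi / (real n + 1)) \<le> cos (pi / (real m + 1))"
  using assms by (subst cos_mono_le_eq) (auto simp: field_simps frac_le)

lemma exp_two_cos_pi_div_minus_less:
  fixes n :: nat
  assumes "2 \<le> n"
  defines "c \<equiv> 2 * cos (pi / (real n + 1))"
  shows "exp c - c < n"
proof -
  have "0 \<le> c" unfolding c_def using assms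
    by (intro mult_nonneg_nonneg cos_ge_zero) (auto simp: field_simps)
  then have bound: "exp c - c < n" if "c \<le> b" and "exp b - b < n" for b
    using exp_minus_self_mono that by fastforce
  consider "n = 2" | "n = 3" | "n = 4 \<or> n = 5" | "6 \<le> n" using assms by linarith
  then show ?thesis
  proof cases
    case 1
    then have "c = 1" by (simp add: c_def cos_60)
    moreover have "exp (1::real) < 3"
      using exp_le_inverse_square_taylor[of 1] by (simp add: numeral_eq_Suc fact_numeral)
    ultimately show ?thesis using 1 by simp
  next
    case 2
    then have "c = sqrt 2" by (simp add: c_def cos_45)
    also have "sqrt 2 \<le> (3/2::real)" by (rule real_le_lsqrt) (auto simp: power2_eq_square)
    finally have "c \<le> 3/2" .
    moreover have "exp (3/2::real) < 9/2"
      using exp_le_inverse_square_taylor[of "3/2"] by (simp add: numeral_eq_Suc fact_numeral)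
    ultimately show ?thesis using 2 bound[of "3/2"] by simp
  next
    case 3
    then have "c \<le> 2 * cos (pi / 6)"
      using cos_pi_div_Suc_mono[of n 5] by (auto simp: c_def)
    also have "\<dots> = sqrt 3" by (simp add: cos_30)
    also have "sqrt 3 \<le> (87/50::real)" by (rule real_le_lsqrt) (auto simp: power2_eq_square)
    finally have "c \<le> 87/50" .
    moreover have "exp (87/50::real) < 287/50"
      using exp_le_inverse_square_taylor[of "87/50"] by (simp add: numeral_eq_Suc fact_numeral)
    ultimately show ?thesis using 3 bound[of "87/50"] by auto
  next
    case 4
    have "c \<le> 2" by (simp add: c_def)
    moreover have "exp (2::real) < 8"
      using exp_le_inverse_square_taylor[of 2] by (simp add: numeral_eq_Suc fact_numeral)
    ultimately show ?thesis using 4 bound[of 2] by simp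
  qed
qed

lemma reachable_imp_predecessor_map:
  assumes "\<forall>v\<in>V. (r, v) \<in> R\<^sup>*"
  obtains p and d :: "'a \<Rightarrow> nat" where "\<forall>v\<in>V - {r}. (p v, v) \<in> R \<and> d (p v) < d v"
proof -
  define d where "d v = (LEAST k. (r, v) \<in> R ^^ k)" for v
  have "\<exists>u. (u, v) \<in> R \<and> d u < d v" if v: "v \<in> V - {r}" for v
  proof -
    have "\<exists>k. (r, v) \<in> R ^^ k" using assms v by (auto simp: rtrancl_power)
    then have "(r, v) \<in> R ^^ d v" unfolding d_def by (rule LeastI_ex)
    moreover have "d v \<noteq> 0"
    proof
      assume "d v = 0"
      with \<open>(r, v) \<in> R ^^ d v\<close> v show False by simp
    qed
    ultimately obtain k where k: "d v = Suc k" "(r, v) \<in> R ^^ k O R"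
      by (metis not0_implies_Suc relpow.simps(2))
    then obtain u where u: "(r, u) \<in> R ^^ k" "(u, v) \<in> R" by blast
    have "d u \<le> k" unfolding d_def using u(1) by (rule Least_le)
    with u(2) k(1) show ?thesis by auto
  qed
  then obtain p where "\<forall>v\<in>V - {r}. (p v, v) \<in> R \<and> d (p v) < d v" by metis
  then show thesis by (rule that)
qed

text \<open>Every vertex other than the root contributes the two arcs to and from its parent in a
  shortest-path tree; no arc is counted twice because a parent is strictly closer to the root.\<close>
lemma card_sym_ge_reachable:
  assumes "finite R" and "sym R" and "\<forall>v\<in>V. (r, v) \<in> R\<^sup>*"
  shows "2 * card (V - {r}) \<le> card R"
proof -
  obtain p and d :: "'a \<Rightarrow> nat" where p: "\<forall>v\<in>V - {r}. (p v, v) \<in> R \<and> d (p v) < d v"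
    using reachable_imp_predecessor_map[OF assms(3)] by blast
  define up where "up v = (p v, v)" for v
  define down where "down v = (v, p v)" for v
  let ?W = "V - {r}"
  have "inj_on up ?W" "inj_on down ?W" by (auto simp: up_def down_def intro: inj_onI)
  moreover have "up ` ?W \<inter> down ` ?W = {}"
  proof (rule ccontr)
    assume "up ` ?W \<inter> down ` ?W \<noteq> {}"
    then obtain v w where "v \<in> ?W" "w \<in> ?W" "(p v, v) = (w, p w)"
      unfolding up_def down_def by blast
    with p have "d w < d v" "d v < d w" by auto
    then show False by simp
  qed
  moreover have "up ` ?W \<union> down ` ?W \<subseteq> R"
    using p \<open>sym R\<close> by (auto simp: up_def down_def dest: symD)
  ultimately have "card (up ` ?W) + card (down ` ?W) \<le> card R"
    using \<open>finite R\<close> by (metis card_Un_disjoint card_mono finite_subset le_sup_iff)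
  with \<open>inj_on up ?W\<close> \<open>inj_on down ?W\<close> show ?thesis by (simp add: card_image)
qed

lemma card_graph_edges_ge:
  assumes "simple_graph n E" and "connected_graph n E"
  shows "2 * (n - 1) \<le> card (graph_edges n E)"
proof -
  have "finite (graph_edges n E)"
    by (rule finite_subset[of _ "{..<n} \<times> {..<n}"]) (auto simp: graph_edges_def)
  moreover have "sym (graph_edges n E)"
    using assms(1) by (auto simp: sym_def graph_edges_def simple_graph_def)
  moreover have "\<forall>v\<in>{..<n}. (0, v) \<in> (graph_edges n E)\<^sup>*"
    using assms(2) by (auto simp: connected_graph_def)
  ultimately have "2 * card ({..<n} - {0}) \<le> card (graph_edges n E)"
    by (rule card_sym_ge_reachable)
  then show ?thesis by (cases n) auto
qed

definition trace :: "'a::comm_ring_1 mat \<Rightarrow> 'a" where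
  "trace A = (\<Sum>i<dim_row A. A $$ (i, i))"

lemma index_mult_mat_sum:
  assumes "A \<in> carrier_mat n m" and "B \<in> carrier_mat m k" and "i < n" and "j < k"
  shows "(A * B) $$ (i, j) = (\<Sum>l<m. A $$ (i, l) * B $$ (l, j))"
  using assms by (auto simp: scalar_prod_def atLeast0LessThan intro: sum.cong)

lemma trace_mult_comm:
  fixes A B :: "'a::comm_ring_1 mat"
  assumes "A \<in> carrier_mat n m" and "B \<in> carrier_mat m n"
  shows "trace (A * B) = trace (B * A)"
proof -
  have "trace (A * B) = (\<Sum>i<n. \<Sum>l<m. A $$ (i, l) * B $$ (l, i))"
    unfolding trace_def using assms by (intro sum.cong refl index_mult_mat_sum[OF assms]) auto
  also have "\<dots> = (\<Sum>l<m. \<Sum>i<n. B $$ (l, i) * A $$ (i, l))"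
    by (subst sum.swap) (simp add: mult.commute)
  also have "\<dots> = trace (B * A)"
    unfolding trace_def using assms
    by (intro sum.cong refl index_mult_mat_sum[OF assms(2,1), symmetric]) auto
  finally show ?thesis .
qed

lemma trace_similar_mat_wit:
  fixes A B :: "'a::comm_ring_1 mat"
  assumes "similar_mat_wit A B P Q"
  shows "trace A = trace B"
proof -
  obtain n where carrier: "A \<in> carrier_mat n n" "B \<in> carrier_mat n n" "P \<in> carrier_mat n n"
      "Q \<in> carrier_mat n n" and QP: "Q * P = 1\<^sub>m n" and A: "A = P * B * Q"
    using similar_mat_witD[OF refl assms] by blast
  have "trace A = trace (Q * (P * B))"
    unfolding A using carrier by (intro trace_mult_comm) auto
  also have "Q * (P * B) = B"
    using carrier by (simp flip: assoc_mult_mat add: QP)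
  finally show ?thesis .
qed

lemma upper_triangular_mult:
  fixes A B :: "'a::comm_ring_1 mat"
  assumes A: "A \<in> carrier_mat n n" and B: "B \<in> carrier_mat n n"
    and "upper_triangular A" and "upper_triangular B"
  shows "upper_triangular (A * B)"
    and "\<And>i. i < n \<Longrightarrow> (A * B) $$ (i, i) = A $$ (i, i) * B $$ (i, i)"
proof -
  have "A $$ (i, l) = 0" if "l < i" "i < n" for i l
    using assms(1,3) that by (intro upper_triangularD) auto
  moreover have "B $$ (l, j) = 0" if "j < l" "l < n" for j l
    using assms(2,4) that by (intro upper_triangularD) auto
  ultimately have vanish: "A $$ (i, l) * B $$ (l, j) = 0" if "i < n" "l < n" "l < i \<or> j < l"
    for i j l
    using that by auto
  show "upper_triangular (A * B)"
  proof
    fix i j assume "j < i" and "i < dim_row (A * B)"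
    then have "(A * B) $$ (i, j) = (\<Sum>l<n. A $$ (i, l) * B $$ (l, j))"
      using A by (intro index_mult_mat_sum[OF A B]) auto
    also have "\<dots> = 0"
      using \<open>j < i\<close> \<open>i < dim_row (A * B)\<close> A by (intro sum.neutral ballI vanish) auto
    finally show "(A * B) $$ (i, j) = 0" .
  qed
  fix i assume i: "i < n"
  then have "(A * B) $$ (i, i) = (\<Sum>l<n. A $$ (i, l) * B $$ (l, i))"
    by (intro index_mult_mat_sum[OF A B])
  also have "\<dots> = (\<Sum>l\<in>{i}. A $$ (i, l) * B $$ (l, i))"
    using i by (intro sum.mono_neutral_right ballI vanish) auto
  finally show
    "(A * B) $$ (i, i) = A $$ (i, i) * B $$ (i, i)" by simp
qed

lemma upper_triangular_pow_mat:
  fixes A :: "'a::comm_ring_1 mat"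
  assumes "A \<in> carrier_mat n n" and "upper_triangular A"
  shows "upper_triangular (A ^\<^sub>m k) \<and> (\<forall>i<n. (A ^\<^sub>m k) $$ (i, i) = A $$ (i, i) ^ k)"
proof (induction k)
  case 0
  then show ?case using assms by auto
next
  case (Suc k)
  have "A ^\<^sub>m k \<in> carrier_mat n n" using assms by simp
  from upper_triangular_mult[OF this assms(1)] Suc assms show ?case
    by (simp del: index_mult_mat(1) add: mult.commute)
qed

lemma trace_pow_upper_triangular:
  fixes A :: "'a::comm_ring_1 mat"
  assumes "A \<in> carrier_mat n n" and "upper_triangular A"
  shows "trace (A ^\<^sub>m k) = (\<Sum>a\<leftarrow>diag_mat A. a ^ k)"
proof -
  have "trace (A ^\<^sub>m k) = (\<Sum>i<n. A $$ (i, i) ^ k)"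
    using assms upper_triangular_pow_mat[OF assms] by (simp add: trace_def)
  also have "\<dots> = (\<Sum>a\<leftarrow>diag_mat A. a ^ k)"
    using assms by (simp add: diag_mat_def sum_list_sum_nth atLeast0LessThan)
  finally show ?thesis .
qed

lemma trace_pow_mat_eq_sum_roots:
  fixes A :: "'a::conjugatable_ordered_field mat"
  assumes "A \<in> carrier_mat n n" and "char_poly A = (\<Prod>a\<leftarrow>as. [:- a, 1:])"
  shows "trace (A ^\<^sub>m k) = (\<Sum>a\<leftarrow>as. a ^ k)"
proof -
  obtain B P Q where "schur_decomposition A as = (B, P, Q)"
    by (cases "schur_decomposition A as") auto
  from schur_decomposition[OF assms this]
  have sim: "similar_mat_wit A B P Q" and "upper_triangular B" and "diag_mat B = as"
    by auto
  moreover have "B \<in> carrier_mat n n" using similar_mat_witD2[OF assms(1) sim] by auto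
  ultimately show ?thesis
    using trace_similar_mat_wit[OF similar_mat_wit_pow[OF sim]] trace_pow_upper_triangular
    by metis
qed

lemma cnj_quadratic_form_real_symmetric:
  fixes A :: "real mat" and v :: "complex vec"
  assumes "\<And>i j. i < n \<Longrightarrow> j < n \<Longrightarrow> A $$ (i, j) = A $$ (j, i)"
  defines "q \<equiv> \<Sum>i<n. cnj (v $ i) * (\<Sum>j<n. of_real (A $$ (i, j)) * v $ j)"
  shows "cnj q = q"
proof -
  have "cnj q = (\<Sum>i<n. \<Sum>j<n. v $ i * of_real (A $$ (i, j)) * cnj (v $ j))"
    unfolding q_def by (simp add: sum_distrib_left mult.assoc)
  also have "\<dots> = (\<Sum>j<n. \<Sum>i<n. v $ i * of_real (A $$ (i, j)) * cnj (v $ j))"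
    by (rule sum.swap)
  also have "\<dots> = q"
    unfolding q_def sum_distrib_left
    by (intro sum.cong refl) (auto simp: assms(1) mult.commute mult.left_commute)
  finally show ?thesis .
qed

lemma Im_eigenvalue_real_symmetric:
  fixes A :: "real mat"
  assumes A: "A \<in> carrier_mat n n"
    and sym: "\<And>i j. i < n \<Longrightarrow> j < n \<Longrightarrow> A $$ (i, j) = A $$ (j, i)"
    and "eigenvalue (map_mat complex_of_real A) z"
  shows "Im z = 0"
proof -
  let ?C = "map_mat complex_of_real A"
  obtain v where v: "v \<in> carrier_vec n" "v \<noteq> 0\<^sub>v n" "?C *\<^sub>v v = z \<cdot>\<^sub>v v"
    using assms(3) A unfolding eigenvalue_def eigenvector_def by auto
  have Cv: "(\<Sum>j<n. of_real (A $$ (i, j)) * v $ j) = z * v $ i" if "i < n" for i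
    using arg_cong[OF v(3), of "\<lambda>w. w $ i"] v(1) A that
    by (simp add: scalar_prod_def atLeast0LessThan)
  define N where "N = (\<Sum>i<n. (cmod (v $ i))\<^sup>2)"
  define q where "q = (\<Sum>i<n. cnj (v $ i) * (\<Sum>j<n. of_real (A $$ (i, j)) * v $ j))"
  have "q = (\<Sum>i<n. cnj (v $ i) * (z * v $ i))"
    unfolding q_def by (intro sum.cong refl) (simp add: Cv)
  also have "\<dots> = z * of_real N"
    unfolding N_def of_real_sum sum_distrib_left
    by (intro sum.cong refl, subst complex_norm_square) (simp add: ac_simps)
  finally have q: "q = z * of_real N" .
  obtain i where i: "i < n" "v $ i \<noteq> 0"
    using v(1,2) by (metis carrier_vecD eq_vecI index_zero_vec(1,2))
  have "0 < (cmod (v $ i))\<^sup>2" using i by simp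
  also have "\<dots> \<le> N" unfolding N_def using i by (intro member_le_sum) auto
  finally have "0 < N" .
  moreover have "Im q = 0"
    using cnj_quadratic_form_real_symmetric[OF sym, of n v]
    by (metis q_def Reals_cnj_iff complex_is_Real_iff)
  ultimately show ?thesis using q by simp
qed

lemma char_poly_real_symmetric_splits:
  fixes A :: "real mat"
  assumes A: "A \<in> carrier_mat n n"
    and sym: "\<And>i j. i < n \<Longrightarrow> j < n \<Longrightarrow> A $$ (i, j) = A $$ (j, i)"
  obtains as where "char_poly A = (\<Prod>a\<leftarrow>as. [:- a, 1:])" and "length as = n"
proof -
  let ?C = "map_mat complex_of_real A"
  have C: "?C \<in> carrier_mat n n" using A by simp
  obtain cs where cs: "char_poly ?C = (\<Prod>c\<leftarrow>cs. [:- c, 1:])" "length cs = n"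
    using char_poly_factorized[OF C] by auto
  have real: "of_real (Re c) = c" if "c \<in> set cs" for c
  proof -
    have "poly (char_poly ?C) c = 0"
      using that unfolding cs(1) poly_prod_list prod_list_zero_iff by auto
    then have "Im c = 0"
      using Im_eigenvalue_real_symmetric[OF A sym] eigenvalue_root_char_poly[OF C] by blast
    then show ?thesis by (simp add: complex_eq_iff)
  qed
  interpret of_real_poly: map_poly_comm_ring_hom "of_real :: real \<Rightarrow> complex" ..
  have "map_poly of_real (\<Prod>a\<leftarrow>map Re cs. [:- a, 1:]) = (\<Prod>c\<leftarrow>cs. [:- c, 1:])"
    using real by (simp add: of_real_poly.hom_prod_list o_def cong: map_cong)
  also have "\<dots> = map_poly of_real (char_poly A)"
    using cs(1) of_real_hom.char_poly_hom[OF A] by metis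
  finally have "char_poly A = (\<Prod>a\<leftarrow>map Re cs. [:- a, 1:])"
    by (simp add: poly_eq_iff coeff_map_poly)
  with cs(2) show thesis using that[of "map Re cs"] by simp
qed

lemma proots_prod_list_linear:
  "proots (\<Prod>a\<leftarrow>as. [:- a, 1:]) = mset (as :: 'a::idom list)"
proof (induction as)
  case (Cons a as)
  have "(\<Prod>a\<leftarrow>as. [:- a, 1:]) \<noteq> 0" by (auto simp: prod_list_zero_iff)
  then have "proots ([:- a, 1:] * (\<Prod>a\<leftarrow>as. [:- a, 1:])) = proots [:- a, 1:] + mset as"
    by (subst proots_mult) (simp_all add: Cons.IH)
  then show ?case by simp
qed simp

lemma adjacency_matrix_carrier: "adjacency_matrix n E \<in> carrier_mat n n"
  by (simp add: adjacency_matrix_def)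

lemma index_adjacency_matrix:
  "i < n \<Longrightarrow> j < n \<Longrightarrow> adjacency_matrix n E $$ (i, j) = (if E i j then 1 else 0)"
  by (simp add: adjacency_matrix_def)

lemma adjacency_matrix_symmetric:
  "simple_graph n E \<Longrightarrow> i < n \<Longrightarrow> j < n \<Longrightarrow>
    adjacency_matrix n E $$ (i, j) = adjacency_matrix n E $$ (j, i)"
  by (auto simp: index_adjacency_matrix simple_graph_def)

lemma trace_adjacency_matrix: "simple_graph n E \<Longrightarrow> trace (adjacency_matrix n E) = 0"
  by (simp add: trace_def adjacency_matrix_def simple_graph_def)

lemma trace_square_adjacency_matrix:
  assumes "simple_graph n E"
  shows "trace (adjacency_matrix n E ^\<^sub>m 2) = card (graph_edges n E)"
proof -
  let ?A = "adjacency_matrix n E"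
  have A: "?A \<in> carrier_mat n n" by (rule adjacency_matrix_carrier)
  have "trace (?A ^\<^sub>m 2) = (\<Sum>i<n. \<Sum>j<n. ?A $$ (i, j) * ?A $$ (j, i))"
    unfolding trace_def numeral_2_eq_2 using A
    by (auto simp del: index_mult_mat(1) intro!: sum.cong index_mult_mat_sum[OF A A])
  also have "\<dots> = (\<Sum>i<n. \<Sum>j<n. if E i j then 1 else 0)"
    using assms by (intro sum.cong refl) (auto simp: index_adjacency_matrix simple_graph_def)
  also have "\<dots> = (\<Sum>x\<in>{..<n} \<times> {..<n}. if E (fst x) (snd x) then 1 else 0)"
    by (simp add: sum.cartesian_product case_prod_beta)
  also have "\<dots> = card {x \<in> {..<n} \<times> {..<n}. E (fst x) (snd x)}"
    by (simp add: sum.If_cases Int_def conj_commute)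
  also have "{x \<in> {..<n} \<times> {..<n}. E (fst x) (snd x)} = graph_edges n E"
    by (auto simp: graph_edges_def)
  finally show ?thesis .
qed

lemma trace_pow_mat_nonneg:
  fixes A :: "'a::linordered_idom mat"
  assumes A: "A \<in> carrier_mat n n" and nonneg: "\<And>i j. i < n \<Longrightarrow> j < n \<Longrightarrow> 0 \<le> A $$ (i, j)"
  shows "0 \<le> trace (A ^\<^sub>m k)"
proof -
  have "\<forall>i<n. \<forall>j<n. 0 \<le> (A ^\<^sub>m k) $$ (i, j)"
  proof (induction k)
    case 0
    then show ?case using A by auto
  next
    case (Suc k)
    have "A ^\<^sub>m k \<in> carrier_mat n n" using A by simp
    with Suc nonneg show ?case
      by (auto simp del: index_mult_mat(1) simp add: index_mult_mat_sum[OF _ A]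
          intro!: sum_nonneg mult_nonneg_nonneg)
  qed
  then show ?thesis using A by (auto simp: trace_def intro!: sum_nonneg)
qed

lemma sum_exp_roots_ge_traces:
  fixes A :: "real mat"
  assumes "A \<in> carrier_mat n n" and "char_poly A = (\<Prod>a\<leftarrow>as. [:- a, 1:])"
  shows "real (length as) + trace A + trace (A ^\<^sub>m 2) / 2 + trace (A ^\<^sub>m 3) / 6
    \<le> (\<Sum>a\<leftarrow>as. exp a)"
proof -
  have "A ^\<^sub>m 1 = A" using assms(1) by simp
  then have "real (length as) + trace A + trace (A ^\<^sub>m 2) / 2 + trace (A ^\<^sub>m 3) / 6
      = real (length as) + (\<Sum>a\<leftarrow>as. a ^ 1) + (\<Sum>a\<leftarrow>as. a ^ 2) / 2 + (\<Sum>a\<leftarrow>as. a ^ 3) / 6"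
    using trace_pow_mat_eq_sum_roots[OF assms] by metis
  also have "\<dots> = (\<Sum>a\<leftarrow>as. 1 + a + a\<^sup>2 / 2 + a ^ 3 / 6)"
    by (induction as) (simp_all add: field_simps)
  also have "\<dots> \<le> (\<Sum>a\<leftarrow>as. exp a)"
  proof (rule sum_list_mono)
    fix a :: real
    have "(\<Sum>k<4. a ^ k / fact k) \<le> exp a" by (rule exp_ge_taylor_polynomial) simp
    then show "1 + a + a\<^sup>2 / 2 + a ^ 3 / 6 \<le> exp a" by (simp add: numeral_eq_Suc fact_numeral)
  qed
  finally show ?thesis .
qed

lemma estrada_index_eq_sum_exp:
  assumes "char_poly (adjacency_matrix n E) = (\<Prod>a\<leftarrow>as. [:- a, 1:])"
  shows "estrada_index n E = (\<Sum>a\<leftarrow>as. exp a)"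
  unfolding estrada_index_def eigenvalues_mset_def assms proots_prod_list_linear
  by (simp add: sum_mset_sum_list flip: mset_map)

theorem mainTheorem7:
  fixes n :: nat and E :: "nat \<Rightarrow> nat \<Rightarrow> bool"
  assumes "n \<ge> 2" and "simple_graph n E" and "connected_graph n E"
  shows "estrada_index n E >
    exp (2 * cos (pi / (real n + 1))) + (real n - 1) - 2 * cos (pi / (real n + 1))"
proof -
  define A where "A = adjacency_matrix n E"
  have A: "A \<in> carrier_mat n n" unfolding A_def by (rule adjacency_matrix_carrier)
  obtain as where as: "char_poly A = (\<Prod>a\<leftarrow>as. [:- a, 1:])" "length as = n"
    using char_poly_real_symmetric_splits[OF A] adjacency_matrix_symmetric[OF assms(2)]
    unfolding A_def by metis
  have "real n + trace A + trace (A ^\<^sub>m 2) / 2 + trace (A ^\<^sub>m 3) / 6 \<le> estrada_index n E"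
    using sum_exp_roots_ge_traces[OF A as(1)] estrada_index_eq_sum_exp as
    unfolding A_def by simp
  moreover have "trace A = 0" "trace (A ^\<^sub>m 2) = card (graph_edges n E)"
    unfolding A_def using assms(2)
    by (simp_all add: trace_adjacency_matrix trace_square_adjacency_matrix)
  moreover have "0 \<le> trace (A ^\<^sub>m 3)"
    using A by (rule trace_pow_mat_nonneg) (simp add: A_def index_adjacency_matrix)
  moreover have "2 * (real n - 1) \<le> card (graph_edges n E)"
  proof -
    have "real (2 * (n - 1)) \<le> card (graph_edges n E)"
      using card_graph_edges_ge[OF assms(2,3)] by (simp only: of_nat_le_iff)
    then show ?thesis using assms(1) by (simp add: of_nat_diff)
  qed
  ultimately have "2 * real n - 1 \<le> estrada_index n E" by argo
  with exp_two_cos_pi_div_minus_less[OF assms(1)] show ?thesis by linarith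
qed

end
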